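(* Almost surely, the functional $E(h)=D(h)-W(h)$ admits a unique minimizer among all configurations $h$.
   Context: Let $L\ge2$ be an integer. A configuration is a function $h:\{0,1,\dots,L\}\to\mathbb R$ with $h(0)=h(L)=0$. $D(h)=\frac12\sum_{x=1}^L(h(x)-h(x-1))^2$; $\{W(x,\cdot)\}_{x=1}^{L-1}$ are independent two-sided standard Brownian motions on $\mathbb R$ (with $W(x,0)=0$), and $W(h)=\sum_{x=1}^{L-1}W(x,h(x))$. *)

theory Defs
  imports "HOL-Probability.Probability"
begin

definition two_sided_BM :: "'a measure \<Rightarrow> (real \<Rightarrow> 'a \<Rightarrow> real) \<Rightarrow> bool" where
  "two_sided_BM M B \<longleftrightarrow>
     (\<forall>t. B t \<in> borel_measurable M) \<and>
     (\<forall>\<omega>\<in>space M. B 0 \<omega> = 0) \<and>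
     (\<forall>\<omega>\<in>space M. continuous_on UNIV (\<lambda>t. B t \<omega>)) \<and>
     (\<forall>ts::real list. sorted_wrt (<) ts \<longrightarrow>
        prob_space.indep_vars M (\<lambda>_. borel)
          (\<lambda>i \<omega>. B (ts ! Suc i) \<omega> - B (ts ! i) \<omega>) {..<length ts - 1} \<and>
        (\<forall>i < length ts - 1.
           distributed M lborel (\<lambda>\<omega>. B (ts ! Suc i) \<omega> - B (ts ! i) \<omega>)
             (normal_density 0 (sqrt (ts ! Suc i - ts ! i)))))"

text \<open>Configurations h : {0..L} \<rightarrow> R with h(0) = h(L) = 0, represented
  as functions on nat that vanish outside {0..L} (so that equality of
  configurations is equality of functions).\<close>
definition configs :: "nat \<Rightarrow> (nat \<Rightarrow> real) set" where
  "configs L = {h. h 0 = 0 \<and> h L = 0 \<and> (\<forall>x>L. h x = 0)}"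

definition Dir :: "nat \<Rightarrow> (nat \<Rightarrow> real) \<Rightarrow> real" where
  "Dir L h = (1/2) * (\<Sum>x=1..L. (h x - h (x - 1))\<^sup>2)"

definition Wpot :: "nat \<Rightarrow> (nat \<Rightarrow> real \<Rightarrow> 'a \<Rightarrow> real) \<Rightarrow> 'a \<Rightarrow> (nat \<Rightarrow> real) \<Rightarrow> real" where
  "Wpot L W \<omega> h = (\<Sum>x=1..L-1. W x (h x) \<omega>)"

definition energy :: "nat \<Rightarrow> (nat \<Rightarrow> real \<Rightarrow> 'a \<Rightarrow> real) \<Rightarrow> 'a \<Rightarrow> (nat \<Rightarrow> real) \<Rightarrow> real" where
  "energy L W \<omega> h = Dir L h - Wpot L W \<omega> h"

end

theory Submission
  imports Defs
begin

lemma square_le_Dir: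
  fixes h :: "nat \<Rightarrow> real"
  assumes "h 0 = 0" and "y \<le> L"
  shows "(h y)\<^sup>2 \<le> 2 * real L * Dir L h"
proof -
  have "h y = (\<Sum>i\<in>{1..y}. h i - h (i - 1))"
  proof -
    have "(\<Sum>i\<in>{1..y}. h i - h (i - 1)) = (\<Sum>i<y. h (Suc i) - h i)"
      by (rule sum.reindex_bij_witness[of _ Suc "\<lambda>i. i - 1"]) auto
    then show ?thesis using assms(1) by (simp add: sum_lessThan_telescope)
  qed
  then have "(h y)\<^sup>2 \<le> (\<Sum>i\<in>{1..y}. (h i - h (i - 1))\<^sup>2) * card {1..y}"
    by (simp only: sum_squared_le_sum_of_squares)
  also have "\<dots> \<le> (\<Sum>i=1..L. (h i - h (i - 1))\<^sup>2) * real L"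
    using assms(2) by (intro mult_mono sum_mono2 sum_nonneg) auto
  finally show ?thesis by (simp add: Dir_def mult.commute)
qed

lemma continuous_on_energy:
  assumes "\<And>y. y \<in> {1..L-1} \<Longrightarrow> continuous_on UNIV (\<lambda>t. W y t \<omega>)"
  shows "continuous_on UNIV (energy L W \<omega>)"
proof -
  have "continuous_on UNIV (\<lambda>h::nat \<Rightarrow> real. W y (h y) \<omega>)" if "y \<in> {1..L-1}" for y
    by (rule continuous_on_compose2[OF assms[OF that]]) auto
  then have "continuous_on UNIV (\<lambda>h::nat \<Rightarrow> real. Dir L h - Wpot L W \<omega> h)"
    unfolding Dir_def Wpot_def by (intro continuous_intros continuous_on_sum) auto
  then show ?thesis unfolding energy_def[abs_def] .
qed

lemma tendsto_energy:
  assumes "\<And>y. y \<in> {1..L-1} \<Longrightarrow> continuous_on UNIV (\<lambda>t. W y t \<omega>)"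
    and "\<And>y. (\<lambda>n. g n y) \<longlonglongrightarrow> h y"
  shows "(\<lambda>n. energy L W \<omega> (g n)) \<longlonglongrightarrow> energy L W \<omega> h"
proof -
  have "(\<lambda>n. W y (g n y) \<omega>) \<longlonglongrightarrow> W y (h y) \<omega>" if "y \<in> {1..L-1}" for y
    using assms(1)[OF that] assms(2)
    by (intro isCont_tendsto_compose[of _ "\<lambda>t. W y t \<omega>"]) (auto simp: continuous_on_eq_continuous_at)
  then show ?thesis
    unfolding energy_def Dir_def Wpot_def by (intro tendsto_intros tendsto_sum assms(2)) auto
qed

lemma configs_outside:
  assumes "h \<in> configs L" and "y \<notin> {1..L-1}"
  shows "h y = 0"
proof -
  have "y = 0 \<or> y = L \<or> L < y" using assms(2) by auto
  then show ?thesis using assms(1) by (auto simp: configs_def)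
qed

lemma Dir_nonneg: "0 \<le> Dir L h"
  by (simp add: Dir_def sum_nonneg)

lemma energy_lower_bound:
  assumes "0 < L" and "h \<in> configs L"
    and "\<And>y t. y \<in> {1..L-1} \<Longrightarrow> W y t \<omega> \<le> t\<^sup>2 / (4 * (real L)\<^sup>2) + B"
  shows "Dir L h / 2 - real (L - 1) * B \<le> energy L W \<omega> h"
proof -
  have sq: "(h y)\<^sup>2 / (4 * (real L)\<^sup>2) \<le> Dir L h / (2 * real L)" if "y \<le> L" for y
  proof -
    have "(h y)\<^sup>2 / (4 * (real L)\<^sup>2) \<le> 2 * real L * Dir L h / (4 * (real L)\<^sup>2)"
      using assms(2) that by (intro divide_right_mono square_le_Dir) (auto simp: configs_def)
    also have "\<dots> = Dir L h / (2 * real L)"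
      using assms(1) by (simp add: power2_eq_square)
    finally show ?thesis .
  qed
  have "Wpot L W \<omega> h \<le> (\<Sum>y=1..L-1. Dir L h / (2 * real L) + B)"
    unfolding Wpot_def by (intro sum_mono order.trans[OF assms(3)] add_right_mono sq) auto
  also have "\<dots> = real (L - 1) / real L * (Dir L h / 2) + real (L - 1) * B"
    by (simp add: algebra_simps)
  also have "\<dots> \<le> Dir L h / 2 + real (L - 1) * B"
    using assms(1) Dir_nonneg[of L h] by (intro add_right_mono mult_left_le_one_le) auto
  finally show ?thesis by (simp add: energy_def)
qed

lemma energy_has_minimizer:
  assumes L: "0 < L"
    and cont: "\<And>y. y \<in> {1..L-1} \<Longrightarrow> continuous_on UNIV (\<lambda>t. W y t \<omega>)"
    and zero: "\<And>y. y \<in> {1..L-1} \<Longrightarrow> W y 0 \<omega> = 0"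
    and grow: "\<And>y t. y \<in> {1..L-1} \<Longrightarrow> W y t \<omega> \<le> t\<^sup>2 / (4 * (real L)\<^sup>2) + B"
  shows "\<exists>h\<in>configs L. \<forall>g\<in>configs L. energy L W \<omega> h \<le> energy L W \<omega> g"
proof -
  define R where "R = sqrt (4 * real L * real (L - 1) * \<bar>B\<bar>)"
  define K where "K = PiE UNIV (\<lambda>i. if i \<in> {1..L-1} then {-R..R} else {0::real})"
  have K_iff: "g \<in> K \<longleftrightarrow> (\<forall>i. g i \<in> (if i \<in> {1..L-1} then {-R..R} else {0}))" for g
    unfolding K_def PiE_UNIV_domain Pi_iff by blast
  have K_configs: "K \<subseteq> configs L"
  proof
    fix g assume "g \<in> K"
    then have "g i = 0" if "i \<notin> {1..L-1}" for i
      using that unfolding K_iff by (metis singletonD)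
    then show "g \<in> configs L" using L by (simp add: configs_def)
  qed
  have "compactin (product_topology (\<lambda>_. euclidean) UNIV) K"
    unfolding K_def by (rule iffD2[OF compactin_PiE]) auto
  then have "compact K" by (simp add: euclidean_product_topology)
  have zero_K: "(\<lambda>_. 0) \<in> K" by (simp add: K_iff R_def)
  then obtain h where "h \<in> K" and h_min: "\<And>g. g \<in> K \<Longrightarrow> energy L W \<omega> h \<le> energy L W \<omega> g"
    using continuous_attains_inf[OF \<open>compact K\<close> _
        continuous_on_subset[OF continuous_on_energy[of L W \<omega>, OF cont] subset_UNIV]]
    by blast
  have "energy L W \<omega> h \<le> 0"
    using h_min[OF zero_K] zero by (simp add: energy_def Dir_def Wpot_def)
  moreover have large: "0 < energy L W \<omega> g" if g: "g \<in> configs L" "g \<notin> K" for g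
  proof -
    obtain i where i: "g i \<notin> (if i \<in> {1..L-1} then {-R..R} else {0})"
      using g(2) unfolding K_iff by blast
    have i_range: "i \<in> {1..L-1}"
    proof (rule ccontr)
      assume "i \<notin> {1..L-1}"
      with i configs_outside[OF g(1) this] show False by (auto split: if_splits)
    qed
    with i have "R < \<bar>g i\<bar>" by auto
    then have "R\<^sup>2 < \<bar>g i\<bar>\<^sup>2"
      by (intro power_strict_mono) (auto simp: R_def)
    then have "real L * (4 * (real (L - 1) * \<bar>B\<bar>)) < (g i)\<^sup>2"
      by (simp add: R_def mult.assoc mult.left_commute)
    also have "\<dots> \<le> real L * (2 * Dir L g)"
      using g i_range square_le_Dir[of g i L] by (auto simp: configs_def mult_ac)
    finally have "4 * (real (L - 1) * \<bar>B\<bar>) < 2 * Dir L g"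
      by (rule mult_left_less_imp_less) simp
    moreover have "real (L - 1) * B \<le> real (L - 1) * \<bar>B\<bar>"
      by (intro mult_left_mono) auto
    ultimately have "real (L - 1) * B < Dir L g / 2" by linarith
    then show ?thesis
      using energy_lower_bound[of L g W \<omega> B, OF L g(1) grow] by linarith
  qed
  ultimately have "energy L W \<omega> h \<le> energy L W \<omega> g" if "g \<in> configs L" for g
    using h_min large[OF that] by (cases "g \<in> K") force+
  then show ?thesis
    using \<open>h \<in> K\<close> K_configs by blast
qed

lemma quadratic_bound_of_linear_bound:
  fixes f :: "real \<Rightarrow> real"
  assumes e: "0 < e" and lin: "\<And>u. \<bar>f u\<bar> \<le> A * \<bar>u\<bar> + C"
  shows "\<exists>B. \<forall>u. f u \<le> e * u\<^sup>2 + B"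
proof (intro exI allI)
  fix u
  have "0 \<le> e * (\<bar>u\<bar> - A / (2 * e))\<^sup>2" using e by simp
  also have "\<dots> = e * u\<^sup>2 - A * \<bar>u\<bar> + A\<^sup>2 / (4 * e)"
    using e by (simp add: power2_eq_square field_simps)
  finally show "f u \<le> e * u\<^sup>2 + (C + A\<^sup>2 / (4 * e))" using lin[of u] by simp
qed

lemma energy_has_minimizer_of_linear_growth:
  assumes L: "0 < L"
    and cont: "\<And>y. y \<in> {1..L-1} \<Longrightarrow> continuous_on UNIV (\<lambda>t. W y t \<omega>)"
    and zero: "\<And>y. y \<in> {1..L-1} \<Longrightarrow> W y 0 \<omega> = 0"
    and lin: "\<And>y. y \<in> {1..L-1} \<Longrightarrow> \<exists>A C. \<forall>u. \<bar>W y u \<omega>\<bar> \<le> A * \<bar>u\<bar> + C"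
  shows "\<exists>h\<in>configs L. \<forall>g\<in>configs L. energy L W \<omega> h \<le> energy L W \<omega> g"
proof -
  have "\<exists>B. \<forall>t. W y t \<omega> \<le> t\<^sup>2 / (4 * (real L)\<^sup>2) + B" if "y \<in> {1..L-1}" for y
    using lin[OF that] quadratic_bound_of_linear_bound[of "1 / (4 * (real L)\<^sup>2)" "\<lambda>t. W y t \<omega>"] L
    by auto
  then obtain B where B: "\<And>y t. y \<in> {1..L-1} \<Longrightarrow> W y t \<omega> \<le> t\<^sup>2 / (4 * (real L)\<^sup>2) + B y"
    by metis
  have grow: "W y t \<omega> \<le> t\<^sup>2 / (4 * (real L)\<^sup>2) + (\<Sum>z\<in>{1..L-1}. \<bar>B z\<bar>)" if "y \<in> {1..L-1}" for y t
    using B[OF that, of t] member_le_sum[OF that, of "\<lambda>z. \<bar>B z\<bar>"] by simp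
  show ?thesis by (rule energy_has_minimizer[of L W \<omega>, OF L cont zero grow])
qed

definition rat_config :: "nat \<Rightarrow> rat list \<Rightarrow> nat \<Rightarrow> real" where
  "rat_config L qs y = (if y \<in> {1..L-1} then of_rat (qs ! (y - 1)) else 0)"

lemma rat_config_configs: "0 < L \<Longrightarrow> rat_config L qs \<in> configs L"
  by (simp add: rat_config_def configs_def)

lemma rat_approx_in_interval:
  fixes u :: real
  assumes "a < b" and "u \<in> {a..b}" and "0 < \<delta>"
  shows "\<exists>q. \<bar>of_rat q - u\<bar> < \<delta> \<and> of_rat q \<in> {a..b}"
proof -
  have "max a (u - \<delta>) < min b (u + \<delta>)" using assms by auto
  then obtain q where "max a (u - \<delta>) < of_rat q" "of_rat q < min b (u + \<delta>)"
    using of_rat_dense by blast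
  then show ?thesis by (intro exI[of _ q]) auto
qed

lemma INF_rat_config_eq_minimum:
  fixes F :: "(nat \<Rightarrow> real) \<Rightarrow> real"
  assumes L: "0 < L" and ab: "a < b" and x: "x \<in> {1..L-1}"
    and h: "h \<in> configs L" "h x \<in> {a..b}"
    and h_min: "\<And>g. g \<in> configs L \<Longrightarrow> F h \<le> F g"
    and F_cont: "\<And>g. (\<And>y. (\<lambda>n. g n y) \<longlonglongrightarrow> h y) \<Longrightarrow> (\<lambda>n. F (g n)) \<longlonglongrightarrow> F h"
  shows "(INF qs\<in>{qs. rat_config L qs x \<in> {a..b}}. ereal (F (rat_config L qs))) = ereal (F h)"
proof (rule antisym)
  show "ereal (F h) \<le> (INF qs\<in>{qs. rat_config L qs x \<in> {a..b}}. ereal (F (rat_config L qs)))"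
    by (intro INF_greatest) (simp add: h_min rat_config_configs[OF L])
next
  define I where "I y = (if y = x then {a..b} else {h y - 1..h y + 1})" for y
  have approx: "\<exists>q. \<bar>of_rat q - h y\<bar> < 1 / Suc n \<and> of_rat q \<in> I y" for n y
  proof (cases "y = x")
    case True
    then show ?thesis using rat_approx_in_interval[OF ab h(2)] by (simp add: I_def)
  next
    case False
    then show ?thesis using rat_approx_in_interval[of "h y - 1" "h y + 1" "h y"] by (simp add: I_def)
  qed
  define q where "q n y = (SOME q. \<bar>of_rat q - h y\<bar> < 1 / Suc n \<and> of_rat q \<in> I y)" for n y
  have q: "\<bar>of_rat (q n y) - h y\<bar> < 1 / Suc n \<and> of_rat (q n y) \<in> I y" for n y
    unfolding q_def by (rule someI_ex[OF approx])
  define qs where "qs n = map (q n) [1..<L]" for n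
  have qs: "rat_config L (qs n) y = (if y \<in> {1..L-1} then of_rat (q n y) else 0)" for n y
    by (auto simp: rat_config_def qs_def)
  have qs_in: "qs n \<in> {qs. rat_config L qs x \<in> {a..b}}" for n
    using q[of n x] x by (simp add: qs I_def)
  have "(\<lambda>n. rat_config L (qs n) y) \<longlonglongrightarrow> h y" for y
  proof (cases "y \<in> {1..L-1}")
    case True
    have "(\<lambda>n. of_rat (q n y) - h y) \<longlonglongrightarrow> 0"
      using q by (intro Lim_null_comparison[OF _ LIMSEQ_inverse_real_of_nat])
        (auto intro!: always_eventually less_imp_le simp: inverse_eq_divide)
    then have "(\<lambda>n. of_rat (q n y)) \<longlonglongrightarrow> h y"
      by (simp add: LIM_zero_iff)
    then show ?thesis using True by (simp add: qs)
  next
    case False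
    then show ?thesis by (simp only: qs if_False configs_outside[OF h(1) False] tendsto_const)
  qed
  then have "(\<lambda>n. ereal (F (rat_config L (qs n)))) \<longlonglongrightarrow> ereal (F h)"
    by (intro tendsto_intros F_cont)
  moreover have "\<forall>n\<ge>0. (INF qs\<in>{qs. rat_config L qs x \<in> {a..b}}. ereal (F (rat_config L qs)))
      \<le> ereal (F (rat_config L (qs n)))"
    using INF_lower[OF qs_in] by blast
  ultimately show "(INF qs\<in>{qs. rat_config L qs x \<in> {a..b}}. ereal (F (rat_config L qs))) \<le> ereal (F h)"
    by (intro LIMSEQ_le_const exI)
qed

definition field_energy :: "nat \<Rightarrow> (nat \<times> real \<Rightarrow> real) \<Rightarrow> (nat \<Rightarrow> real) \<Rightarrow> real" where
  "field_energy L v h = Dir L h - (\<Sum>y=1..L-1. v (y, h y))"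

definition inf_field_energy :: "nat \<Rightarrow> nat \<Rightarrow> real set \<Rightarrow> (nat \<times> real \<Rightarrow> real) \<Rightarrow> ereal" where
  "inf_field_energy L x I v =
     (INF qs\<in>{qs. rat_config L qs x \<in> I}. ereal (field_energy L v (rat_config L qs)))"

definition energy_gap ::
    "nat \<Rightarrow> nat \<Rightarrow> real \<Rightarrow> real \<Rightarrow> real \<Rightarrow> real \<Rightarrow> (nat \<times> real \<Rightarrow> real) \<Rightarrow> real" where
  "energy_gap L x a b c d v =
     real_of_ereal (inf_field_energy L x {c..d} v) - real_of_ereal (inf_field_energy L x {a..b} v)"

definition pinned_path :: "real \<Rightarrow> real \<Rightarrow> real \<Rightarrow> real \<Rightarrow> (real \<Rightarrow> real) \<Rightarrow> real \<Rightarrow> real" where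
  "pinned_path a b c d f t = (if t \<in> {a..b} then f t - f b else if t \<in> {c..d} then f t - f c else 0)"

definition pinned_field ::
    "nat \<Rightarrow> nat \<Rightarrow> (nat \<Rightarrow> real \<Rightarrow> 'a \<Rightarrow> real) \<Rightarrow> real \<Rightarrow> real \<Rightarrow> real \<Rightarrow> real \<Rightarrow> 'a \<Rightarrow> nat \<times> real \<Rightarrow> real" where
  "pinned_field L x W a b c d \<omega> =
     (\<lambda>(y, t). if y = x then pinned_path a b c d (\<lambda>s. W x s \<omega>) t else if y \<in> {1..L-1} then W y t \<omega> else 0)"

definition energy_gaps_generic :: "nat \<Rightarrow> (nat \<Rightarrow> real \<Rightarrow> 'a \<Rightarrow> real) \<Rightarrow> 'a \<Rightarrow> bool" where
  "energy_gaps_generic L W \<omega> \<longleftrightarrow>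
     (\<forall>x\<in>{1..L-1}. \<forall>a b c d :: rat. a < b \<longrightarrow> b < c \<longrightarrow> c < d \<longrightarrow>
        energy_gap L x (of_rat a) (of_rat b) (of_rat c) (of_rat d)
          (pinned_field L x W (of_rat a) (of_rat b) (of_rat c) (of_rat d) \<omega>)
        \<noteq> W x (of_rat c) \<omega> - W x (of_rat b) \<omega>)"

lemma field_energy_eq_energy_plus:
  assumes "x \<in> {1..L-1}" and "v (x, h x) = W x (h x) \<omega> - s"
    and "\<And>y. y \<in> {1..L-1} \<Longrightarrow> y \<noteq> x \<Longrightarrow> v (y, h y) = W y (h y) \<omega>"
  shows "field_energy L v h = energy L W \<omega> h + s"
proof -
  have "(\<Sum>y=1..L-1. v (y, h y)) = v (x, h x) + (\<Sum>y\<in>{1..L-1}-{x}. W y (h y) \<omega>)"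
    using assms(1,3) by (simp add: sum.remove[of _ x])
  moreover have "Wpot L W \<omega> h = W x (h x) \<omega> + (\<Sum>y\<in>{1..L-1}-{x}. W y (h y) \<omega>)"
    using assms(1) by (simp add: Wpot_def sum.remove[of _ x])
  ultimately show ?thesis
    using assms(2) by (simp add: field_energy_def energy_def)
qed

lemma inf_field_energy_eq_minimum:
  assumes L: "0 < L" and x: "x \<in> {1..L-1}"
    and cont: "\<And>y. y \<in> {1..L-1} \<Longrightarrow> continuous_on UNIV (\<lambda>t. W y t \<omega>)"
    and h: "h \<in> configs L" and h_min: "\<And>g. g \<in> configs L \<Longrightarrow> energy L W \<omega> h \<le> energy L W \<omega> g"
    and pq: "p < q" and hx: "h x \<in> {p..q}"
    and v_x: "\<And>t. t \<in> {p..q} \<Longrightarrow> v (x, t) = W x t \<omega> - s"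
    and v_other: "\<And>y t. y \<in> {1..L-1} \<Longrightarrow> y \<noteq> x \<Longrightarrow> v (y, t) = W y t \<omega>"
  shows "inf_field_energy L x {p..q} v = ereal (energy L W \<omega> h + s)"
proof -
  have "inf_field_energy L x {p..q} v =
      (INF qs\<in>{qs. rat_config L qs x \<in> {p..q}}. ereal (energy L W \<omega> (rat_config L qs) + s))"
    unfolding inf_field_energy_def
    using x by (intro INF_cong refl arg_cong[where f=ereal] field_energy_eq_energy_plus v_other) (auto simp: v_x)
  also have "\<dots> = ereal (energy L W \<omega> h + s)"
    using h_min
    by (intro INF_rat_config_eq_minimum[of L p q x h "\<lambda>g. energy L W \<omega> g + s", OF L pq x h hx]
        tendsto_add tendsto_const tendsto_energy[of L W \<omega>, OF cont]) auto
  finally show ?thesis .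
qed

lemma pinned_field_other:
  "y \<in> {1..L-1} \<Longrightarrow> y \<noteq> x \<Longrightarrow> pinned_field L x W a b c d \<omega> (y, t) = W y t \<omega>"
  by (simp add: pinned_field_def)

lemma energy_minimizers_agree_at:
  assumes L: "0 < L" and x: "x \<in> {1..L-1}"
    and cont: "\<And>y. y \<in> {1..L-1} \<Longrightarrow> continuous_on UNIV (\<lambda>t. W y t \<omega>)"
    and gap: "\<And>a b c d. a < b \<Longrightarrow> b < c \<Longrightarrow> c < d \<Longrightarrow>
       energy_gap L x (of_rat a) (of_rat b) (of_rat c) (of_rat d)
         (pinned_field L x W (of_rat a) (of_rat b) (of_rat c) (of_rat d) \<omega>)
       \<noteq> W x (of_rat c) \<omega> - W x (of_rat b) \<omega>"
    and h1: "h1 \<in> configs L" "\<And>g. g \<in> configs L \<Longrightarrow> energy L W \<omega> h1 \<le> energy L W \<omega> g"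
    and h2: "h2 \<in> configs L" "\<And>g. g \<in> configs L \<Longrightarrow> energy L W \<omega> h2 \<le> energy L W \<omega> g"
  shows "\<not> h1 x < h2 x"
proof
  assume lt: "h1 x < h2 x"
  define m where "m = (h1 x + h2 x) / 2"
  obtain a b c d :: rat where
    a: "h1 x - 1 < of_rat a" "of_rat a < h1 x" and b: "h1 x < of_rat b" "of_rat b < m" and
    c: "m < of_rat c" "of_rat c < h2 x" and d: "h2 x < of_rat d" "of_rat d < h2 x + 1"
    using of_rat_dense[of "h1 x - 1" "h1 x"] of_rat_dense[of "h1 x" m]
      of_rat_dense[of m "h2 x"] of_rat_dense[of "h2 x" "h2 x + 1"] lt
    by (auto simp: m_def)
  then have abcd: "a < b" "b < c" "c < d"
    by (meson less_trans of_rat_less)+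
  let ?v = "pinned_field L x W (of_rat a) (of_rat b) (of_rat c) (of_rat d) \<omega>"
  have "inf_field_energy L x {of_rat a..of_rat b} ?v = ereal (energy L W \<omega> h1 + W x (of_rat b) \<omega>)"
    using a b abcd
    by (intro inf_field_energy_eq_minimum[OF L x cont h1] pinned_field_other)
      (auto simp: pinned_field_def pinned_path_def)
  moreover have "inf_field_energy L x {of_rat c..of_rat d} ?v = ereal (energy L W \<omega> h2 + W x (of_rat c) \<omega>)"
    using b c d abcd
    by (intro inf_field_energy_eq_minimum[OF L x cont h2] pinned_field_other)
      (auto simp: pinned_field_def pinned_path_def of_rat_less)
  moreover have "energy L W \<omega> h1 = energy L W \<omega> h2"
    using h1 h2 by (simp add: order_antisym)
  ultimately have "energy_gap L x (of_rat a) (of_rat b) (of_rat c) (of_rat d) ?v =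
      W x (of_rat c) \<omega> - W x (of_rat b) \<omega>"
    by (simp add: energy_gap_def)
  with gap[OF abcd] show False by contradiction
qed

lemma energy_minimizer_unique:
  assumes L: "0 < L"
    and cont: "\<And>y. y \<in> {1..L-1} \<Longrightarrow> continuous_on UNIV (\<lambda>t. W y t \<omega>)"
    and generic: "energy_gaps_generic L W \<omega>"
    and h1: "h1 \<in> configs L" "\<And>g. g \<in> configs L \<Longrightarrow> energy L W \<omega> h1 \<le> energy L W \<omega> g"
    and h2: "h2 \<in> configs L" "\<And>g. g \<in> configs L \<Longrightarrow> energy L W \<omega> h2 \<le> energy L W \<omega> g"
  shows "h1 = h2"
proof
  fix x
  show "h1 x = h2 x"
  proof (cases "x \<in> {1..L-1}")
    case True
    have "energy_gap L x (of_rat a) (of_rat b) (of_rat c) (of_rat d)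
        (pinned_field L x W (of_rat a) (of_rat b) (of_rat c) (of_rat d) \<omega>)
      \<noteq> W x (of_rat c) \<omega> - W x (of_rat b) \<omega>" if "a < b" "b < c" "c < d" for a b c d
      using generic True that by (simp add: energy_gaps_generic_def)
    then show ?thesis
      using energy_minimizers_agree_at[OF L True cont _ h1 h2]
        energy_minimizers_agree_at[OF L True cont _ h2 h1] by (meson linorder_neqE)
  next
    case False
    then show ?thesis using configs_outside h1(1) h2(1) by metis
  qed
qed

lemma (in prob_space) two_sided_BM_measurable:
  "two_sided_BM M B \<Longrightarrow> B t \<in> borel_measurable M"
  by (simp add: two_sided_BM_def)

lemma (in prob_space) two_sided_BM_increment_distributed:
  assumes "two_sided_BM M B" and "s < t"
  shows "distributed M lborel (\<lambda>\<omega>. B t \<omega> - B s \<omega>) (\<lambda>x. ennreal (normal_density 0 (sqrt (t - s)) x))"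
proof -
  have "sorted_wrt (<) [s, t]" using assms(2) by simp
  then show ?thesis using assms(1) unfolding two_sided_BM_def by fastforce
qed

lemma (in prob_space) normal_tail_le_fourth_moment:
  assumes X: "distributed M lborel X (\<lambda>x. ennreal (normal_density 0 \<sigma> x))"
    and \<sigma>: "0 < \<sigma>" and r: "0 < r"
  shows "prob {\<omega>\<in>space M. r < \<bar>X \<omega>\<bar>} \<le> 3 * \<sigma>^4 / r^4"
proof -
  have [measurable]: "X \<in> borel_measurable M"
    using distributed_measurable[OF X] by simp
  have "integrable lborel (\<lambda>x. normal_density 0 \<sigma> x * (x - 0) ^ 4)"
    by (rule integrable_normal_moment[OF \<sigma>])
  then have int: "integrable M (\<lambda>\<omega>. X \<omega> ^ 4)"
    using distributed_integrable[OF X, of "\<lambda>x. x ^ 4"] by simp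
  have "expectation (\<lambda>\<omega>. X \<omega> ^ 4) = (\<integral>x. normal_density 0 \<sigma> x * x ^ 4 \<partial>lborel)"
    using distributed_integral[OF X, of "\<lambda>x. x ^ 4"] by simp
  also have "\<dots> = fact (2 * 2) / ((2 / \<sigma>\<^sup>2)^2 * fact 2)"
    using integral_normal_moment_even[where k=2 and \<mu>=0, OF \<sigma>] by simp
  also have "\<dots> = 3 * \<sigma>^4"
    using \<sigma> by (simp add: fact_numeral power_divide flip: power_mult)
  finally have E: "expectation (\<lambda>\<omega>. X \<omega> ^ 4) = 3 * \<sigma>^4" .
  have "r^4 \<le> X \<omega> ^ 4" if "r < \<bar>X \<omega>\<bar>" for \<omega>
    using power_mono[of r "\<bar>X \<omega>\<bar>" 4] r that by simp
  then have "{\<omega>\<in>space M. r < \<bar>X \<omega>\<bar>} \<subseteq> {\<omega>\<in>space M. r^4 \<le> X \<omega> ^ 4}"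
    by blast
  then have "prob {\<omega>\<in>space M. r < \<bar>X \<omega>\<bar>} \<le> prob {\<omega>\<in>space M. r^4 \<le> X \<omega> ^ 4}"
    by (intro finite_measure_mono) measurable
  also have "\<dots> \<le> expectation (\<lambda>\<omega>. X \<omega> ^ 4) / r^4"
    by (rule integral_Markov_inequality_measure[OF int, of "space M"]) (use r in auto)
  finally show ?thesis unfolding E .
qed

lemma (in prob_space) two_sided_BM_increment_tail:
  assumes B: "two_sided_BM M B" and r: "0 < r"
  shows "prob {\<omega>\<in>space M. r < \<bar>B t \<omega> - B s \<omega>\<bar>} \<le> 3 * (t - s)\<^sup>2 / r^4"
proof -
  have lt: "prob {\<omega>\<in>space M. r < \<bar>B t \<omega> - B s \<omega>\<bar>} \<le> 3 * (t - s)\<^sup>2 / r^4" if "s < t" for s t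
  proof -
    have "(sqrt (t - s))^4 = ((sqrt (t - s))\<^sup>2)\<^sup>2"
      by (simp flip: power_mult)
    also have "\<dots> = (t - s)\<^sup>2"
      using that by simp
    finally have "(sqrt (t - s))^4 = (t - s)\<^sup>2" .
    then show ?thesis
      using normal_tail_le_fourth_moment[OF two_sided_BM_increment_distributed[OF B that] _ r] that
      by simp
  qed
  consider "s < t" | "s = t" | "t < s" by linarith
  then show ?thesis
  proof cases
    case 3
    have "{\<omega>\<in>space M. r < \<bar>B t \<omega> - B s \<omega>\<bar>} = {\<omega>\<in>space M. r < \<bar>B s \<omega> - B t \<omega>\<bar>}" by auto
    with lt[OF 3] show ?thesis by (simp add: power2_commute)
  qed (use lt r in auto)
qed

lemma dyadic_chain_bound:
  fixes g :: "real \<Rightarrow> real"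
  assumes step: "\<And>k j. j < 2^k \<Longrightarrow> \<bar>g (real (Suc j) / 2^k) - g (real j / 2^k)\<bar> \<le> \<delta> k"
  shows "j \<le> 2^K \<Longrightarrow> \<bar>g (real j / 2^K) - g 0\<bar> \<le> (\<Sum>k\<le>K. \<delta> k)"
proof (induction K arbitrary: j)
  case 0
  then have "j = 0 \<or> j = 1" by auto
  then show ?case using step[of 0 0] by auto
next
  case (Suc K)
  define i where "i = j div 2"
  have "0 \<le> \<delta> (Suc K)" using step[of 0 "Suc K"] by (meson abs_ge_zero order_trans zero_less_numeral zero_less_power)
  have i_le: "i \<le> 2^K" using Suc.prems by (simp add: i_def)
  have half: "real (2 * i) / 2 ^ Suc K = real i / 2 ^ K" by simp
  have IH: "\<bar>g (real i / 2^K) - g 0\<bar> \<le> (\<Sum>k\<le>K. \<delta> k)" by (rule Suc.IH[OF i_le])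
  show ?case
  proof (cases "even j")
    case True
    then have "j = 2 * i" by (simp add: i_def)
    then show ?thesis using IH half \<open>0 \<le> \<delta> (Suc K)\<close> by simp
  next
    case False
    then have j: "j = Suc (2 * i)" by (simp add: i_def)
    then have "\<bar>g (real j / 2 ^ Suc K) - g (real i / 2^K)\<bar> \<le> \<delta> (Suc K)"
      using step[of "2 * i" "Suc K"] Suc.prems half by simp
    then show ?thesis using IH by simp
  qed
qed

lemma continuous_dyadic_chain_bound:
  fixes g :: "real \<Rightarrow> real"
  assumes cont: "continuous_on UNIV g"
    and step: "\<And>k j. j < 2^k \<Longrightarrow> \<bar>g (real (Suc j) / 2^k) - g (real j / 2^k)\<bar> \<le> \<delta> k"
    and \<delta>: "\<And>k. 0 \<le> \<delta> k" "summable \<delta>"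
    and t: "0 \<le> t" "t \<le> 1"
  shows "\<bar>g t - g 0\<bar> \<le> suminf \<delta>"
proof -
  define u where "u K = real (nat \<lfloor>t * 2^K\<rfloor>) / 2^K" for K :: nat
  have u_le: "u K \<le> t" for K
    using of_nat_floor[of "t * 2^K"] t by (simp add: u_def field_simps)
  have u_ge: "t - 1 / 2^K \<le> u K" for K
  proof -
    have "t * 2^K - 1 \<le> real (nat \<lfloor>t * 2^K\<rfloor>)"
      using t by linarith
    then have "(t * 2^K - 1) / 2^K \<le> u K"
      unfolding u_def by (intro divide_right_mono) auto
    then show ?thesis by (simp add: diff_divide_distrib)
  qed
  have u_dyadic: "nat \<lfloor>t * 2^K\<rfloor> \<le> 2^K" for K :: nat
  proof -
    have "0 \<le> t * 2^K" "t * 2^K \<le> 2^K"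
      using t by (simp_all add: mult_left_le_one_le)
    then have "real (nat \<lfloor>t * 2^K\<rfloor>) \<le> 2^K"
      by (rule order_trans[OF of_nat_floor])
    then show ?thesis by (metis of_nat_le_iff of_nat_numeral of_nat_power)
  qed
  have bound: "\<bar>g (u K) - g 0\<bar> \<le> suminf \<delta>" for K
  proof -
    have "\<bar>g (u K) - g 0\<bar> \<le> (\<Sum>k\<le>K. \<delta> k)"
      unfolding u_def by (rule dyadic_chain_bound[of g \<delta>, OF step u_dyadic])
    also have "\<dots> \<le> suminf \<delta>"
      using \<delta> by (intro sum_le_suminf) auto
    finally show ?thesis .
  qed
  have "(\<lambda>K. t - 1 / 2 ^ K) \<longlonglongrightarrow> t - 0"
    by (intro tendsto_intros LIMSEQ_divide_realpow_zero) auto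
  then have lim: "(\<lambda>K. t - 1 / 2 ^ K) \<longlonglongrightarrow> t" by simp
  have "u \<longlonglongrightarrow> t"
  proof (rule tendsto_sandwich[OF _ _ lim tendsto_const])
    show "\<forall>\<^sub>F K in sequentially. t - 1 / 2 ^ K \<le> u K" by (intro always_eventually allI u_ge)
    show "\<forall>\<^sub>F K in sequentially. u K \<le> t" by (intro always_eventually allI u_le)
  qed
  then have "(\<lambda>K. \<bar>g (u K) - g 0\<bar>) \<longlonglongrightarrow> \<bar>g t - g 0\<bar>"
    using cont by (intro tendsto_intros) (auto intro: continuous_on_tendsto_compose[where s=UNIV])
  then show ?thesis by (rule LIMSEQ_le_const2) (auto intro: bound)
qed

lemma linear_growth_of_dyadic_bounds:
  fixes f :: "real \<Rightarrow> real"
  assumes cont: "continuous_on UNIV f" and f0: "f 0 = 0"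
    and dyadic: "\<And>m \<sigma> k j. N \<le> m \<Longrightarrow> \<bar>\<sigma>\<bar> = 1 \<Longrightarrow> j < 2^k \<Longrightarrow>
        \<bar>f (\<sigma> * (real m + real (Suc j) / 2^k)) - f (\<sigma> * (real m + real j / 2^k))\<bar> \<le> (real m + 1) * (9/10)^k"
    and endpoint: "\<And>m \<sigma>. N \<le> m \<Longrightarrow> \<bar>\<sigma>\<bar> = 1 \<Longrightarrow> \<bar>f (\<sigma> * real m) - f 0\<bar> \<le> real m + 1"
  shows "\<exists>A C. \<forall>u. \<bar>f u\<bar> \<le> A * \<bar>u\<bar> + C"
proof -
  have unit: "\<bar>f (\<sigma> * (real m + t))\<bar> \<le> 11 * (real m + 1)"
    if m: "N \<le> m" and \<sigma>: "\<bar>\<sigma>\<bar> = 1" and t: "0 \<le> t" "t \<le> 1" for m \<sigma> t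
  proof -
    define \<delta> where "\<delta> k = (real m + 1) * (9/10::real)^k" for k :: nat
    have "\<delta> sums ((real m + 1) * (1 / (1 - 9/10)))"
      unfolding \<delta>_def by (intro sums_mult geometric_sums) simp
    then have "\<delta> sums ((real m + 1) * 10)" by simp
    then have "summable \<delta>" "suminf \<delta> = (real m + 1) * 10"
      by (auto simp: sums_iff)
    moreover have "continuous_on UNIV (\<lambda>u. f (\<sigma> * (real m + u)))"
      by (rule continuous_on_compose2[OF cont]) (auto intro!: continuous_intros)
    ultimately have "\<bar>f (\<sigma> * (real m + t)) - f (\<sigma> * (real m + 0))\<bar> \<le> (real m + 1) * 10"
      using continuous_dyadic_chain_bound[of "\<lambda>u. f (\<sigma> * (real m + u))" \<delta> t] dyadic[OF m \<sigma>] t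
      by (simp add: \<delta>_def)
    moreover have "\<bar>f (\<sigma> * real m)\<bar> \<le> real m + 1"
      using endpoint[OF m \<sigma>] f0 by simp
    ultimately show ?thesis by simp
  qed
  obtain C where C: "\<And>u. u \<in> {-real N..real N} \<Longrightarrow> \<bar>f u\<bar> \<le> C"
    using compact_imp_bounded[OF compact_continuous_image[OF continuous_on_subset[OF cont subset_UNIV]
          compact_Icc[of "-real N" "real N"]]]
    unfolding bounded_real by (metis imageI)
  have "\<bar>f u\<bar> \<le> 11 * \<bar>u\<bar> + (C + 11)" for u
  proof (cases "\<bar>u\<bar> \<le> real N")
    case True
    then have "\<bar>f u\<bar> \<le> C" by (intro C) auto
    then show ?thesis by simp
  next
    case False
    define m where "m = nat \<lfloor>\<bar>u\<bar>\<rfloor>"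
    define \<sigma> where "\<sigma> = (if 0 \<le> u then 1 else -1 :: real)"
    have m: "\<bar>u\<bar> - 1 < real m" "real m \<le> \<bar>u\<bar>"
      using of_nat_floor[of "\<bar>u\<bar>"] by (auto simp: m_def)
    have "N \<le> m" using False by (simp add: m_def le_nat_floor)
    moreover have "u = \<sigma> * (real m + (\<bar>u\<bar> - real m))" by (simp add: \<sigma>_def)
    ultimately have "\<bar>f u\<bar> \<le> 11 * (real m + 1)"
      using unit[of m \<sigma> "\<bar>u\<bar> - real m"] m by (simp add: \<sigma>_def)
    then show ?thesis using m C[of 0] by simp
  qed
  then show ?thesis by blast
qed

definition dyadic_jump_event :: "'a measure \<Rightarrow> (real \<Rightarrow> 'a \<Rightarrow> real) \<Rightarrow> real \<Rightarrow> nat \<Rightarrow> nat \<Rightarrow> 'a set" where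
  "dyadic_jump_event M B \<sigma> m k = (\<Union>j<2^k. {\<omega>\<in>space M. (real m + 1) * (9/10)^k <
     \<bar>B (\<sigma> * (real m + real (Suc j) / 2^k)) \<omega> - B (\<sigma> * (real m + real j / 2^k)) \<omega>\<bar>})"

definition endpoint_jump_event :: "'a measure \<Rightarrow> (real \<Rightarrow> 'a \<Rightarrow> real) \<Rightarrow> real \<Rightarrow> nat \<Rightarrow> 'a set" where
  "endpoint_jump_event M B \<sigma> m = {\<omega>\<in>space M. real m + 1 < \<bar>B (\<sigma> * real m) \<omega> - B 0 \<omega>\<bar>}"

lemma (in prob_space) jump_events_sets:
  assumes "two_sided_BM M B"
  shows "dyadic_jump_event M B \<sigma> m k \<in> events" "endpoint_jump_event M B \<sigma> m \<in> events"
proof -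
  have [measurable]: "\<And>t. B t \<in> borel_measurable M" by (rule two_sided_BM_measurable[OF assms])
  show "dyadic_jump_event M B \<sigma> m k \<in> events"
    unfolding dyadic_jump_event_def by measurable
  show "endpoint_jump_event M B \<sigma> m \<in> events"
    unfolding endpoint_jump_event_def by measurable
qed

lemma (in prob_space) prob_dyadic_jump_event:
  assumes B: "two_sided_BM M B" and \<sigma>: "\<bar>\<sigma>\<bar> = 1"
  shows "prob (dyadic_jump_event M B \<sigma> m k) \<le> 3 / (real m + 1)^4 * (5000/6561)^k"
proof -
  define r where "r = (real m + 1) * (9/10)^k"
  have r: "0 < r" by (simp add: r_def)
  have step: "(\<sigma> * (real m + real (Suc j) / 2^k) - \<sigma> * (real m + real j / 2^k))\<^sup>2 = (1/4)^k" for j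
  proof -
    have "\<sigma> * (real m + real (Suc j) / 2^k) - \<sigma> * (real m + real j / 2^k) = \<sigma> / 2^k"
      by (simp add: field_simps)
    moreover have "\<sigma>\<^sup>2 = 1" using \<sigma> by (metis power2_abs power_one)
    moreover have "(2::real) ^ (k * 2) = 4 ^ k" by (simp add: mult.commute[of k] power_mult)
    ultimately show ?thesis by (simp add: power_divide power_one_over flip: power_mult power_mult_distrib)
  qed
  have [measurable]: "\<And>t. B t \<in> borel_measurable M" by (rule two_sided_BM_measurable[OF B])
  have "prob (dyadic_jump_event M B \<sigma> m k) \<le> (\<Sum>j<(2::nat)^k. prob {\<omega>\<in>space M. r <
      \<bar>B (\<sigma> * (real m + real (Suc j) / 2^k)) \<omega> - B (\<sigma> * (real m + real j / 2^k)) \<omega>\<bar>})"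
    unfolding dyadic_jump_event_def r_def[symmetric] by (rule measure_UNION_le) auto
  also have "\<dots> \<le> (\<Sum>j<(2::nat)^k. 3 * (1/4)^k / r^4)"
    by (intro sum_mono order.trans[OF two_sided_BM_increment_tail[OF B r]]) (simp only: step order_refl)
  also have "\<dots> = 3 / (real m + 1)^4 * (2^k * (1/4)^k / ((9/10)^4)^k)"
    by (simp add: r_def power_mult_distrib mult.commute[of k] flip: power_mult)
  also have "\<dots> = 3 / (real m + 1)^4 * (2 * (1/4) / (9/10)^4)^k"
    by (simp only: power_mult_distrib power_divide)
  also have "\<dots> = 3 / (real m + 1)^4 * (5000/6561)^k"
    by (simp add: power_divide)
  finally show ?thesis .
qed

lemma (in prob_space) prob_UN_dyadic_jump_event:
  assumes B: "two_sided_BM M B" and \<sigma>: "\<bar>\<sigma>\<bar> = 1"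
  shows "prob (\<Union>k. dyadic_jump_event M B \<sigma> m k) \<le> 13 / (real m + 1)\<^sup>2"
proof -
  have "(\<lambda>k. 3 / (real m + 1)^4 * (5000/6561::real)^k) sums (3 / (real m + 1)^4 * (1 / (1 - 5000/6561)))"
    by (intro sums_mult geometric_sums) simp
  then have geom: "(\<lambda>k. 3 / (real m + 1)^4 * (5000/6561::real)^k) sums (3 / (real m + 1)^4 * (6561/1561))"
    by simp
  have summable_prob: "summable (\<lambda>k. prob (dyadic_jump_event M B \<sigma> m k))"
    by (rule summable_comparison_test'[OF sums_summable[OF geom], of 0])
      (use prob_dyadic_jump_event[OF B \<sigma>] in simp)
  then have "prob (\<Union>k. dyadic_jump_event M B \<sigma> m k) \<le> (\<Sum>k. prob (dyadic_jump_event M B \<sigma> m k))"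
    using jump_events_sets[OF B] by (intro finite_measure_subadditive_countably) auto
  also have "\<dots> \<le> (\<Sum>k. 3 / (real m + 1)^4 * (5000/6561::real)^k)"
    by (intro suminf_le prob_dyadic_jump_event[OF B \<sigma>] summable_prob sums_summable[OF geom])
  also have "\<dots> = 3 / (real m + 1)^4 * (6561/1561)"
    using geom by (rule sums_unique[symmetric])
  also have "\<dots> \<le> 13 / (real m + 1)^4"
    using divide_right_mono[of "19683/1561" 13 "(real m + 1)^4"] by simp
  also have "\<dots> \<le> 13 / (real m + 1)\<^sup>2"
    by (intro divide_left_mono power_increasing) auto
  finally show ?thesis .
qed
lemma (in prob_space) prob_endpoint_jump_event:
  assumes B: "two_sided_BM M B" and \<sigma>: "\<bar>\<sigma>\<bar> = 1"
  shows "prob (endpoint_jump_event M B \<sigma> m) \<le> 3 / (real m + 1)\<^sup>2"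
proof -
  have "(\<sigma> * real m)\<^sup>2 = (real m)\<^sup>2"
    using \<sigma> by (simp add: power_mult_distrib) (metis power2_abs power_one)
  then have "prob (endpoint_jump_event M B \<sigma> m) \<le> 3 * (real m)\<^sup>2 / (real m + 1)^4"
    using two_sided_BM_increment_tail[OF B, of "real m + 1" "\<sigma> * real m" 0]
    by (simp add: endpoint_jump_event_def)
  also have "\<dots> \<le> 3 * (real m + 1)\<^sup>2 / (real m + 1)^4"
    by (intro divide_right_mono mult_left_mono power_mono) auto
  also have "\<dots> = 3 * (real m + 1)\<^sup>2 / ((real m + 1)\<^sup>2 * (real m + 1)\<^sup>2)"
    by (simp flip: power_add)
  also have "\<dots> = 3 / (real m + 1)\<^sup>2"
    by (rule nonzero_mult_divide_mult_cancel_right) simp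
  finally show ?thesis .
qed

lemma (in prob_space) two_sided_BM_linear_growth:
  assumes B: "two_sided_BM M B"
  shows "AE \<omega> in M. \<exists>A C. \<forall>u. \<bar>B u \<omega>\<bar> \<le> A * \<bar>u\<bar> + C"
proof -
  define E where "E m = (\<Union>\<sigma>\<in>{1, -1}. (\<Union>k. dyadic_jump_event M B \<sigma> m k) \<union> endpoint_jump_event M B \<sigma> m)"
    for m
  have E_sets: "E m \<in> events" for m
    unfolding E_def using jump_events_sets[OF B] by auto
  have "prob ((\<Union>k. dyadic_jump_event M B \<sigma> m k) \<union> endpoint_jump_event M B \<sigma> m)
      \<le> 16 / (real m + 1)\<^sup>2" if "\<bar>\<sigma>\<bar> = 1" for \<sigma> m
  proof -
    have "(\<Union>k. dyadic_jump_event M B \<sigma> m k) \<in> events"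
      using jump_events_sets[OF B] by auto
    have "prob ((\<Union>k. dyadic_jump_event M B \<sigma> m k) \<union> endpoint_jump_event M B \<sigma> m)
        \<le> 13 / (real m + 1)\<^sup>2 + 3 / (real m + 1)\<^sup>2"
      using measure_Un_le[OF \<open>(\<Union>k. dyadic_jump_event M B \<sigma> m k) \<in> events\<close>
          jump_events_sets(2)[OF B, of \<sigma> m]]
        prob_UN_dyadic_jump_event[OF B that, of m] prob_endpoint_jump_event[OF B that, of m]
      by linarith
    then show ?thesis by (simp add: add_divide_distrib[symmetric])
  qed
  note bound = this
  have "prob (E m) \<le> (\<Sum>\<sigma>\<in>{1, -1::real}.
      prob ((\<Union>k. dyadic_jump_event M B \<sigma> m k) \<union> endpoint_jump_event M B \<sigma> m))" for m
    unfolding E_def by (rule measure_UNION_le) (use jump_events_sets[OF B] in auto)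
  also have "\<dots> m \<le> (\<Sum>\<sigma>\<in>{1, -1::real}. 16 / (real m + 1)\<^sup>2)" for m
    by (rule sum_mono) (auto intro: bound)
  finally have E_prob: "prob (E m) \<le> 32 * inverse (real (Suc m) ^ 2)" for m
    by (simp add: inverse_eq_divide add.commute)
  have "summable (\<lambda>m. inverse (real m ^ 2))"
    by (rule inverse_power_summable) simp
  then have "summable (\<lambda>m. 32 * inverse (real (Suc m) ^ 2))"
    by (intro summable_mult) (subst summable_Suc_iff)
  then have "summable (\<lambda>m. prob (E m))"
    by (rule summable_comparison_test'[where N=0]) (use E_prob in simp)
  then have "AE \<omega> in M. \<forall>\<^sub>F m in sequentially. \<omega> \<in> space M - E m"
    using E_sets by (intro borel_cantelli_AE1) (auto simp: emeasure_eq_measure)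
  then show ?thesis
  proof (rule AE_mp[OF _ AE_I2[OF impI]])
    fix \<omega> assume \<omega>: "\<omega> \<in> space M" and "\<forall>\<^sub>F m in sequentially. \<omega> \<in> space M - E m"
    then obtain N where N_E: "\<And>m. N \<le> m \<Longrightarrow> \<omega> \<notin> E m"
      by (auto simp: eventually_sequentially)
    have N: "\<omega> \<notin> dyadic_jump_event M B \<sigma> m k" "\<omega> \<notin> endpoint_jump_event M B \<sigma> m"
      if "N \<le> m" "\<bar>\<sigma>\<bar> = 1" for m \<sigma> k
    proof -
      have "\<sigma> \<in> {1, -1}" using that(2) by auto
      then show "\<omega> \<notin> dyadic_jump_event M B \<sigma> m k" "\<omega> \<notin> endpoint_jump_event M B \<sigma> m"
        using N_E[OF that(1)] by (auto simp: E_def)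
    qed
    show "\<exists>A C. \<forall>u. \<bar>B u \<omega>\<bar> \<le> A * \<bar>u\<bar> + C"
    proof (rule linear_growth_of_dyadic_bounds)
      show "continuous_on UNIV (\<lambda>u. B u \<omega>)" "B 0 \<omega> = 0"
        using B \<omega> by (auto simp: two_sided_BM_def)
      show "\<bar>B (\<sigma> * (real m + real (Suc j) / 2 ^ k)) \<omega> - B (\<sigma> * (real m + real j / 2 ^ k)) \<omega>\<bar>
          \<le> (real m + 1) * (9/10)^k" if "N \<le> m" "\<bar>\<sigma>\<bar> = 1" "j < 2^k" for m \<sigma> k j
        using N(1)[OF that(1,2), of k] \<omega> that(3) by (auto simp: dyadic_jump_event_def not_less)
      show "\<bar>B (\<sigma> * real m) \<omega> - B 0 \<omega>\<bar> \<le> real m + 1" if "N \<le> m" "\<bar>\<sigma>\<bar> = 1" for m \<sigma>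
        using N(2)[OF that] \<omega> by (auto simp: endpoint_jump_event_def not_less)
    qed
  qed
qed

lemma (in prob_space) indep_var_prob_conj:
  assumes "indep_var N1 X1 N2 X2" and "A \<in> sets N1" and "B \<in> sets N2"
  shows "\<P>(\<omega> in M. X1 \<omega> \<in> A \<and> X2 \<omega> \<in> B) = \<P>(\<omega> in M. X1 \<omega> \<in> A) * \<P>(\<omega> in M. X2 \<omega> \<in> B)"
proof -
  have "{\<omega>\<in>space M. X1 \<omega> \<in> A \<and> X2 \<omega> \<in> B} = (\<lambda>\<omega>. (X1 \<omega>, X2 \<omega>)) -` (A \<times> B) \<inter> space M"
    "{\<omega>\<in>space M. X1 \<omega> \<in> A} = X1 -` A \<inter> space M" "{\<omega>\<in>space M. X2 \<omega> \<in> B} = X2 -` B \<inter> space M"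
    by auto
  then show ?thesis using indep_varD[OF assms] by simp
qed

lemma (in prob_space) indep_var_functional_of_finite_dim_indep:
  fixes Z :: "'a \<Rightarrow> real" and Y :: "'a \<Rightarrow> 'i \<Rightarrow> real"
  assumes Z: "Z \<in> borel_measurable M" and Y_i: "\<And>i. (\<lambda>\<omega>. Y \<omega> i) \<in> borel_measurable M"
    and fd: "\<And>J S E. finite J \<Longrightarrow> S \<in> sets borel \<Longrightarrow> (\<And>i. i \<in> J \<Longrightarrow> E i \<in> sets borel) \<Longrightarrow>
       \<P>(\<omega> in M. Z \<omega> \<in> S \<and> (\<forall>i\<in>J. Y \<omega> i \<in> E i)) =
       \<P>(\<omega> in M. Z \<omega> \<in> S) * \<P>(\<omega> in M. \<forall>i\<in>J. Y \<omega> i \<in> E i)"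
    and g: "g \<in> borel_measurable (Pi\<^sub>M UNIV (\<lambda>_. borel))"
  shows "indep_var borel Z borel (\<lambda>\<omega>. g (Y \<omega>) :: real)"
proof -
  let ?P = "Pi\<^sub>M (UNIV :: 'i set) (\<lambda>_. borel :: real measure)"
  have Y: "Y \<in> measurable M ?P"
    by (rule measurable_PiM_single') (use Y_i in auto)
  define ZG where "ZG = {Z -` A \<inter> space M | A. A \<in> sets (borel :: real measure)}"
  define G where "G = {Y -` A \<inter> space M | A. A \<in> prod_algebra UNIV (\<lambda>_::'i. borel :: real measure)}"
  have "{Y -` A \<inter> space M | A. A \<in> sets ?P} = sigma_sets (space M) G"
    unfolding sets_PiM G_def
    by (rule sigma_sets_vimage_commute) (use Y measurable_space in \<open>auto simp: space_PiM\<close>)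
  moreover have "sigma_sets (space M) (sigma_sets (space M) G) = sigma_sets (space M) G"
    by (rule sigma_sets_sigma_sets_eq) (auto simp: G_def)
  ultimately have sigma_G:
    "sigma_sets (space M) {Y -` A \<inter> space M | A. A \<in> sets ?P} = sigma_sets (space M) G"
    by simp
  have "Int_stable ZG"
    unfolding ZG_def
  proof (safe intro!: Int_stableI)
    fix A B :: "real set" assume "A \<in> sets borel" "B \<in> sets borel"
    then show "\<exists>C. (Z -` A \<inter> space M) \<inter> (Z -` B \<inter> space M) = Z -` C \<inter> space M \<and> C \<in> sets borel"
      by (intro exI[of _ "A \<inter> B"]) auto
  qed
  moreover have "Int_stable G"
    unfolding G_def
  proof (safe intro!: Int_stableI)
    fix A B assume "A \<in> prod_algebra UNIV (\<lambda>_::'i. borel :: real measure)"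
      "B \<in> prod_algebra UNIV (\<lambda>_::'i. borel :: real measure)"
    then show "\<exists>C. (Y -` A \<inter> space M) \<inter> (Y -` B \<inter> space M) = Y -` C \<inter> space M \<and>
        C \<in> prod_algebra UNIV (\<lambda>_. borel)"
      using Int_stable_prod_algebra unfolding Int_stable_def by (intro exI[of _ "A \<inter> B"]) auto
  qed
  moreover have "indep_set ZG G"
    unfolding indep_sets2_eq
  proof (intro conjI ballI)
    show "ZG \<subseteq> events" unfolding ZG_def using Z by (auto intro: measurable_sets)
    show "G \<subseteq> events"
      unfolding G_def using Y by (auto intro!: measurable_sets[OF Y] simp: sets_PiM intro: sigma_sets.Basic)
    fix a b assume "a \<in> ZG" "b \<in> G"
    then obtain S A where S: "S \<in> sets borel" "a = Z -` S \<inter> space M"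
      and A: "A \<in> prod_algebra UNIV (\<lambda>_::'i. borel :: real measure)" "b = Y -` A \<inter> space M"
      unfolding ZG_def G_def by auto
    from prod_algebraE[OF A(1)] obtain J E where J: "A = prod_emb UNIV (\<lambda>_. borel) J (PiE J E)"
      "finite J" "\<And>i. i \<in> J \<Longrightarrow> E i \<in> sets borel" by metis
    have b: "b = {\<omega>\<in>space M. \<forall>i\<in>J. Y \<omega> i \<in> E i}"
      unfolding A(2) J(1) by (auto simp: prod_emb_def PiE_iff)
    have a: "a = {\<omega>\<in>space M. Z \<omega> \<in> S}" unfolding S(2) by auto
    have "a \<inter> b = {\<omega>\<in>space M. Z \<omega> \<in> S \<and> (\<forall>i\<in>J. Y \<omega> i \<in> E i)}"
      unfolding a b by auto
    then show "prob (a \<inter> b) = prob a * prob b"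
      unfolding a b using fd[of J S E, OF J(2) S(1) J(3)] by simp
  qed
  ultimately have "indep_set (sigma_sets (space M) ZG) (sigma_sets (space M) G)"
    by (intro indep_set_sigma_sets)
  moreover have "{(\<lambda>\<omega>. g (Y \<omega>)) -` A \<inter> space M | A. A \<in> sets borel} \<subseteq> {Y -` A \<inter> space M | A. A \<in> sets ?P}"
  proof safe
    fix A :: "real set" assume "A \<in> sets borel"
    then have "g -` A \<inter> space ?P \<in> sets ?P" using measurable_sets[OF g] by blast
    moreover have "(\<lambda>\<omega>. g (Y \<omega>)) -` A \<inter> space M = Y -` (g -` A \<inter> space ?P) \<inter> space M"
      using measurable_space[OF Y] by auto
    ultimately show "\<exists>B. (\<lambda>\<omega>. g (Y \<omega>)) -` A \<inter> space M = Y -` B \<inter> space M \<and> B \<in> sets ?P" by blast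
  qed
  then have "sigma_sets (space M) {(\<lambda>\<omega>. g (Y \<omega>)) -` A \<inter> space M | A. A \<in> sets borel}
      \<subseteq> sigma_sets (space M) G"
    unfolding sigma_G[symmetric] by (rule sigma_sets_subseteq)
  ultimately have "indep_set (sigma_sets (space M) ZG)
      (sigma_sets (space M) {(\<lambda>\<omega>. g (Y \<omega>)) -` A \<inter> space M | A. A \<in> sets borel})"
    unfolding indep_sets2_eq by blast
  moreover have "(\<lambda>\<omega>. g (Y \<omega>)) \<in> borel_measurable M"
    using g Y by measurable
  ultimately show ?thesis
    unfolding indep_var_eq ZG_def using Z by simp
qed

lemma (in prob_space) prob_eq_indep_of_density_eq_0:
  fixes Z G :: "'a \<Rightarrow> real"
  assumes ind: "indep_var borel Z borel G" and Z_density: "distributed M lborel Z f"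
  shows "\<P>(\<omega> in M. Z \<omega> = G \<omega>) = 0"
proof -
  have [measurable]: "Z \<in> borel_measurable M" "G \<in> borel_measurable M"
    using indep_var_rv1[OF ind] indep_var_rv2[OF ind] by simp_all
  let ?PZ = "distr M borel Z" and ?PG = "distr M borel G"
  interpret PZ: prob_space ?PZ by (rule prob_space_distr) simp
  interpret PG: prob_space ?PG by (rule prob_space_distr) simp
  interpret P: pair_sigma_finite ?PZ ?PG ..
  define A where "A = {p \<in> space (borel \<Otimes>\<^sub>M borel). fst p = (snd p :: real)}"
  have A: "A \<in> sets (borel \<Otimes>\<^sub>M borel)" unfolding A_def by measurable
  have atomless: "emeasure ?PZ {y} = 0" for y
  proof -
    have "emeasure ?PZ {y} = emeasure M (Z -` {y} \<inter> space M)" by (simp add: emeasure_distr)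
    also have "\<dots> = (\<integral>\<^sup>+x. f x * indicator {y} x \<partial>lborel)"
      by (rule distributed_emeasure[OF Z_density]) simp
    also have "\<dots> = (\<integral>\<^sup>+(x::real). 0 \<partial>lborel)"
      by (rule nn_integral_cong_AE) (use AE_lborel_singleton[of y] in \<open>auto elim!: AE_mp\<close>)
    finally show ?thesis by simp
  qed
  have "emeasure M {\<omega>\<in>space M. Z \<omega> = G \<omega>} = emeasure M ((\<lambda>\<omega>. (Z \<omega>, G \<omega>)) -` A \<inter> space M)"
    unfolding A_def by (intro arg_cong[where f="emeasure M"]) (auto simp: space_pair_measure)
  also have "\<dots> = emeasure (distr M (borel \<Otimes>\<^sub>M borel) (\<lambda>\<omega>. (Z \<omega>, G \<omega>))) A"
    by (rule emeasure_distr[symmetric]) (simp_all add: A)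
  also have "\<dots> = emeasure (?PZ \<Otimes>\<^sub>M ?PG) A"
    using ind unfolding indep_var_distribution_eq by simp
  also have "\<dots> = (\<integral>\<^sup>+y. emeasure ?PZ ((\<lambda>x. (x, y)) -` A) \<partial>?PG)"
  proof (rule P.emeasure_pair_measure_alt2)
    have "sets (?PZ \<Otimes>\<^sub>M ?PG) = sets (borel \<Otimes>\<^sub>M borel)"
      by (rule sets_pair_measure_cong) simp_all
    then show "A \<in> sets (?PZ \<Otimes>\<^sub>M ?PG)" using A by simp
  qed
  also have "\<dots> = (\<integral>\<^sup>+y. 0 \<partial>?PG)"
  proof (rule nn_integral_cong)
    fix y
    have "(\<lambda>x. (x, y)) -` A = {y}" unfolding A_def by (auto simp: space_pair_measure)
    then show "emeasure ?PZ ((\<lambda>x. (x, y)) -` A) = 0" using atomless by simp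
  qed
  finally show ?thesis by (simp add: emeasure_eq_measure)
qed

lemma strict_sorted_nth_le_iff:
  fixes xs :: "'a::linorder list"
  assumes "sorted_wrt (<) xs" and "i < length xs" and "j < length xs"
  shows "xs ! i \<le> xs ! j \<longleftrightarrow> i \<le> j"
proof
  assume "xs ! i \<le> xs ! j"
  then show "i \<le> j"
    using sorted_wrt_nth_less[OF assms(1) _ assms(2), of j] by (meson leD linorder_not_le)
next
  assume "i \<le> j"
  then show "xs ! i \<le> xs ! j"
    using sorted_wrt_nth_less[OF assms(1) _ assms(3), of i] by (cases "i = j") auto
qed

lemma strict_sorted_list_adjacent:
  fixes T :: "'a::linorder set"
  assumes "finite T" and "b \<in> T" "c \<in> T" "b < c" and gap: "\<And>t. t \<in> T \<Longrightarrow> t \<le> b \<or> c \<le> t"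
  obtains ts k where "sorted_wrt (<) ts" "set ts = T" "Suc k < length ts" "ts ! k = b" "ts ! Suc k = c"
proof -
  define ts where "ts = sorted_list_of_set T"
  have ts: "sorted_wrt (<) ts" "set ts = T"
    using assms(1) by (simp_all add: ts_def)
  obtain k j where k: "k < length ts" "ts ! k = b" and j: "j < length ts" "ts ! j = c"
    using assms(2,3) ts(2) by (metis in_set_conv_nth)
  have "k < j" using strict_sorted_nth_le_iff[OF ts(1) j(1) k(1)] assms(4) j k by auto
  then have Suc_k: "Suc k < length ts" using j by simp
  have "b < ts ! Suc k" using sorted_wrt_nth_less[OF ts(1) lessI Suc_k] k by simp
  moreover have "ts ! Suc k \<in> T" using Suc_k ts(2) nth_mem by blast
  moreover have "ts ! Suc k \<le> c"
    using strict_sorted_nth_le_iff[OF ts(1) Suc_k j(1)] \<open>k < j\<close> j by simp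
  ultimately have "ts ! Suc k = c" using gap by fastforce
  with ts Suc_k k show ?thesis using that by blast
qed

lemma (in prob_space) prob_increment_indep_pinned_path:
  assumes B: "two_sided_BM M B" and abcd: "a \<le> b" "b < c" "c \<le> d"
    and J: "finite J" and S: "S \<in> sets borel" and E: "\<And>t. t \<in> J \<Longrightarrow> E t \<in> sets borel"
  shows "\<P>(\<omega> in M. B c \<omega> - B b \<omega> \<in> S \<and> (\<forall>t\<in>J. pinned_path a b c d (\<lambda>s. B s \<omega>) t \<in> E t)) =
    \<P>(\<omega> in M. B c \<omega> - B b \<omega> \<in> S) * \<P>(\<omega> in M. \<forall>t\<in>J. pinned_path a b c d (\<lambda>s. B s \<omega>) t \<in> E t)"
proof -
  define T where "T = (J \<inter> ({a..b} \<union> {c..d})) \<union> {b, c}"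
  obtain ts k where ts: "sorted_wrt (<) ts" "set ts = T" and k: "Suc k < length ts" "ts ! k = b" "ts ! Suc k = c"
    using strict_sorted_list_adjacent[of T b c] J abcd by (auto simp: T_def)
  define n where "n = length ts"
  define D where "D i \<omega> = B (ts ! Suc i) \<omega> - B (ts ! i) \<omega>" for i \<omega>
  define R where "R = {..<n - 1} - {k}"
  have "indep_vars (\<lambda>_. borel) D {..<n - 1}"
    using B ts(1) unfolding two_sided_BM_def D_def n_def by blast
  then have ind: "indep_var (Pi\<^sub>M {k} (\<lambda>_. borel)) (\<lambda>\<omega>. restrict (\<lambda>i. D i \<omega>) {k})
      (Pi\<^sub>M R (\<lambda>_. borel)) (\<lambda>\<omega>. restrict (\<lambda>i. D i \<omega>) R)"
    by (rule indep_var_restrict) (use k in \<open>auto simp: R_def n_def\<close>)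
  define cf where "cf t i =
    (if t \<in> {a..b} then (if t \<le> ts ! i \<and> ts ! Suc i \<le> b then -1 else 0)
     else if t \<in> {c..d} then (if c \<le> ts ! i \<and> ts ! Suc i \<le> t then 1 else 0) else 0 :: real)" for t i
  have le_iff: "ts ! i \<le> ts ! j \<longleftrightarrow> i \<le> j" if "i < n" "j < n" for i j
    using strict_sorted_nth_le_iff[OF ts(1)] that by (simp add: n_def)
  have telescope: "(\<Sum>i\<in>{p..<q}. D i \<omega>) = B (ts ! q) \<omega> - B (ts ! p) \<omega>" if "p \<le> q" for p q \<omega>
    unfolding D_def by (rule sum_Suc_diff'[OF that])
  have sum_R: "(\<Sum>i\<in>R. (if p \<le> i \<and> i < q then f i else 0)) = (\<Sum>i\<in>{p..<q}. f i)"
    if "{p..<q} \<subseteq> R" for p q and f :: "nat \<Rightarrow> real"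
  proof -
    have "{i \<in> R. p \<le> i \<and> i < q} = {p..<q}" using that by auto
    moreover have "finite R" by (simp add: R_def)
    ultimately show ?thesis by (simp flip: sum.inter_filter)
  qed
  have key: "pinned_path a b c d (\<lambda>s. B s \<omega>) t = (\<Sum>i\<in>R. cf t i * D i \<omega>)" if "t \<in> J" for \<omega> t
  proof -
    consider (ab) "t \<in> {a..b}" | (cd) "t \<notin> {a..b}" "t \<in> {c..d}" | (none) "t \<notin> {a..b} \<union> {c..d}"
      by blast
    then show ?thesis
    proof cases
      case ab
      then have "t \<in> set ts" using that by (simp add: ts(2) T_def)
      then obtain j where j: "j < n" "ts ! j = t" by (auto simp: in_set_conv_nth n_def)
      then have "j \<le> k" using le_iff[OF j(1), of k] k ab by (simp add: n_def)
      have "cf t i * D i \<omega> = (if j \<le> i \<and> i < k then - D i \<omega> else 0)" if "i \<in> R" for i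
      proof -
        have "i < n" "Suc i < n" using that by (auto simp: R_def)
        then have "t \<le> ts ! i \<longleftrightarrow> j \<le> i" "ts ! Suc i \<le> b \<longleftrightarrow> i < k"
          using le_iff[OF j(1)] le_iff[of "Suc i" k] j k by (auto simp: n_def)
        then show ?thesis using ab by (simp add: cf_def)
      qed
      then have "(\<Sum>i\<in>R. cf t i * D i \<omega>) = (\<Sum>i\<in>R. if j \<le> i \<and> i < k then - D i \<omega> else 0)"
        by (intro sum.cong) auto
      also have "\<dots> = (\<Sum>i\<in>{j..<k}. - D i \<omega>)"
        by (rule sum_R) (use k in \<open>auto simp: R_def n_def\<close>)
      finally show ?thesis
        using ab j k telescope[OF \<open>j \<le> k\<close>] by (simp add: pinned_path_def sum_negf)
    next
      case cd
      then have "t \<in> set ts" using that by (simp add: ts(2) T_def)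
      then obtain j where j: "j < n" "ts ! j = t" by (auto simp: in_set_conv_nth n_def)
      then have "Suc k \<le> j" using le_iff[OF _ j(1), of "Suc k"] k cd abcd by (simp add: n_def)
      have "cf t i * D i \<omega> = (if Suc k \<le> i \<and> i < j then D i \<omega> else 0)" if "i \<in> R" for i
      proof -
        have "i < n" "Suc i < n" using that by (auto simp: R_def)
        then have "c \<le> ts ! i \<longleftrightarrow> Suc k \<le> i" "ts ! Suc i \<le> t \<longleftrightarrow> i < j"
          using le_iff[of "Suc k" i] le_iff[OF _ j(1), of "Suc i"] j k by (auto simp: n_def)
        then show ?thesis using cd by (simp add: cf_def del: atLeastAtMost_iff)
      qed
      then have "(\<Sum>i\<in>R. cf t i * D i \<omega>) = (\<Sum>i\<in>R. if Suc k \<le> i \<and> i < j then D i \<omega> else 0)"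
        by (intro sum.cong) auto
      also have "\<dots> = (\<Sum>i\<in>{Suc k..<j}. D i \<omega>)"
        by (rule sum_R) (use j in \<open>auto simp: R_def n_def\<close>)
      finally show ?thesis
        using cd j k telescope[OF \<open>Suc k \<le> j\<close>] by (simp add: pinned_path_def del: atLeastAtMost_iff)
    next
      case none
      then have "cf t i = 0" for i by (simp add: cf_def)
      with none show ?thesis by (auto simp: pinned_path_def)
    qed
  qed
  define X1 where "X1 = {v \<in> space (Pi\<^sub>M {k} (\<lambda>_. borel :: real measure)). v k \<in> S}"
  define X2 where "X2 = {v \<in> space (Pi\<^sub>M R (\<lambda>_. borel :: real measure)). \<forall>t\<in>J. (\<Sum>i\<in>R. cf t i * v i) \<in> E t}"
  have "X1 \<in> sets (Pi\<^sub>M {k} (\<lambda>_. borel))"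
    unfolding X1_def using S by measurable
  moreover have "X2 \<in> sets (Pi\<^sub>M R (\<lambda>_. borel))"
    unfolding X2_def
  proof (rule sets.sets_Collect_finite_All[OF _ J])
    fix t assume "t \<in> J"
    show "{v \<in> space (Pi\<^sub>M R (\<lambda>_. borel)). (\<Sum>i\<in>R. cf t i * v i) \<in> E t} \<in> sets (Pi\<^sub>M R (\<lambda>_. borel))"
      by (rule pred_sets2[OF E[OF \<open>t \<in> J\<close>], unfolded pred_def]) measurable
  qed
  ultimately have "\<P>(\<omega> in M. restrict (\<lambda>i. D i \<omega>) {k} \<in> X1 \<and> restrict (\<lambda>i. D i \<omega>) R \<in> X2) =
      \<P>(\<omega> in M. restrict (\<lambda>i. D i \<omega>) {k} \<in> X1) * \<P>(\<omega> in M. restrict (\<lambda>i. D i \<omega>) R \<in> X2)"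
    by (rule indep_var_prob_conj[OF ind])
  moreover have "restrict (\<lambda>i. D i \<omega>) {k} \<in> X1 \<longleftrightarrow> B c \<omega> - B b \<omega> \<in> S" for \<omega>
    using k by (simp add: X1_def D_def space_PiM)
  moreover have "restrict (\<lambda>i. D i \<omega>) R \<in> X2 \<longleftrightarrow> (\<forall>t\<in>J. pinned_path a b c d (\<lambda>s. B s \<omega>) t \<in> E t)" for \<omega>
    by (simp add: X2_def key space_PiM)
  ultimately show ?thesis by simp
qed

lemma (in prob_space) prob_increment_indep_pinned_field:
  fixes J :: "(nat \<times> real) set"
  assumes x: "x \<in> {1..L-1}"
    and BM: "\<And>y. y \<in> {1..L-1} \<Longrightarrow> two_sided_BM M (W y)"
    and indep: "indep_vars (\<lambda>_. Pi\<^sub>M UNIV (\<lambda>_. borel)) (\<lambda>y \<omega>. \<lambda>t. W y t \<omega>) {1..L-1}"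
    and abcd: "a \<le> b" "b < c" "c \<le> d"
    and J: "finite J" and S: "S \<in> sets borel" and E: "\<And>i. i \<in> J \<Longrightarrow> E i \<in> sets borel"
  shows "\<P>(\<omega> in M. W x c \<omega> - W x b \<omega> \<in> S \<and> (\<forall>i\<in>J. pinned_field L x W a b c d \<omega> i \<in> E i)) =
    \<P>(\<omega> in M. W x c \<omega> - W x b \<omega> \<in> S) * \<P>(\<omega> in M. \<forall>i\<in>J. pinned_field L x W a b c d \<omega> i \<in> E i)"
proof -
  let ?P = "\<lambda>_::nat. Pi\<^sub>M (UNIV :: real set) (\<lambda>_. borel :: real measure)"
  define S' where "S' = {1..L-1} - {x}"
  define U where "U \<omega> = restrict (\<lambda>y t. W y t \<omega>) {x}" for \<omega>
  define R where "R \<omega> = restrict (\<lambda>y t. W y t \<omega>) S'" for \<omega>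
  have ind: "indep_var (Pi\<^sub>M {x} ?P) U (Pi\<^sub>M S' ?P) R"
    unfolding U_def R_def by (rule indep_var_restrict[OF indep]) (use x in \<open>auto simp: S'_def\<close>)
  define J1 where "J1 = snd ` {i \<in> J. fst i = x}"
  define J2 where "J2 = {i \<in> J. fst i \<noteq> x}"
  have J12: "finite J1" "finite J2" using J by (simp_all add: J1_def J2_def)
  define X1' where "X1' = {u \<in> space (Pi\<^sub>M {x} ?P). \<forall>t\<in>J1. pinned_path a b c d (u x) t \<in> E (x, t)}"
  define X1 where "X1 = {u \<in> space (Pi\<^sub>M {x} ?P). u x c - u x b \<in> S} \<inter> X1'"
  define X2 where "X2 = {r \<in> space (Pi\<^sub>M S' ?P). \<forall>i\<in>J2. (if fst i \<in> S' then r (fst i) (snd i) else 0) \<in> E i}"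
  have component: "(\<lambda>u. u y t) \<in> borel_measurable (Pi\<^sub>M K ?P)" if "y \<in> K" for y t K
    using measurable_compose[OF measurable_component_singleton[OF that]
        measurable_component_singleton[of t UNIV]] by simp
  have "(\<lambda>u. pinned_path a b c d (u x) t) \<in> borel_measurable (Pi\<^sub>M {x} ?P)" for t
    unfolding pinned_path_def using component[of x "{x}"]
    by (cases "t \<in> {a..b}"; cases "t \<in> {c..d}") (simp_all add: borel_measurable_diff)
  note pinned_measurable = this
  have X1': "X1' \<in> sets (Pi\<^sub>M {x} ?P)"
    unfolding X1'_def
  proof (rule sets.sets_Collect_finite_All[OF _ J12(1)])
    fix t assume "t \<in> J1"
    then have "E (x, t) \<in> sets borel" using E by (auto simp: J1_def)
    then show "{u \<in> space (Pi\<^sub>M {x} ?P). pinned_path a b c d (u x) t \<in> E (x, t)} \<in> sets (Pi\<^sub>M {x} ?P)"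
      by (rule pred_sets2[unfolded pred_def, OF _ pinned_measurable])
  qed
  have "{u \<in> space (Pi\<^sub>M {x} ?P). u x c - u x b \<in> S} \<in> sets (Pi\<^sub>M {x} ?P)"
    by (rule pred_sets2[unfolded pred_def, OF S]) (intro borel_measurable_diff component; simp)
  then have X1: "X1 \<in> sets (Pi\<^sub>M {x} ?P)"
    unfolding X1_def using X1' by blast
  have X2: "X2 \<in> sets (Pi\<^sub>M S' ?P)"
    unfolding X2_def
  proof (rule sets.sets_Collect_finite_All[OF _ J12(2)])
    fix i assume "i \<in> J2"
    then have "E i \<in> sets borel" using E by (auto simp: J2_def)
    then show "{r \<in> space (Pi\<^sub>M S' ?P). (if fst i \<in> S' then r (fst i) (snd i) else 0) \<in> E i}
        \<in> sets (Pi\<^sub>M S' ?P)"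
      by (rule pred_sets2[unfolded pred_def]) (cases "fst i \<in> S'"; simp add: component)
  qed
  have field_J: "(\<forall>i\<in>J. pinned_field L x W a b c d \<omega> i \<in> E i) \<longleftrightarrow> U \<omega> \<in> X1' \<and> R \<omega> \<in> X2" for \<omega>
  proof -
    have "(\<forall>i\<in>J. P i) \<longleftrightarrow> (\<forall>t\<in>J1. P (x, t)) \<and> (\<forall>i\<in>J2. P i)" for P :: "nat \<times> real \<Rightarrow> bool"
      by (auto simp: J1_def J2_def)
    then show ?thesis
      by (simp add: X1'_def X2_def U_def R_def S'_def space_PiM pinned_field_def J2_def)
  qed
  have U_X1': "U \<omega> \<in> X1' \<longleftrightarrow> (\<forall>t\<in>J1. pinned_path a b c d (\<lambda>s. W x s \<omega>) t \<in> E (x, t))" for \<omega>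
    by (simp add: X1'_def U_def space_PiM)
  have U_X1: "U \<omega> \<in> X1 \<longleftrightarrow> W x c \<omega> - W x b \<omega> \<in> S \<and> U \<omega> \<in> X1'" for \<omega>
    by (auto simp: X1_def X1'_def U_def space_PiM)
  have "E (x, t) \<in> sets borel" if "t \<in> J1" for t
    using that E by (auto simp: J1_def)
  then have "\<P>(\<omega> in M. U \<omega> \<in> X1) =
      \<P>(\<omega> in M. W x c \<omega> - W x b \<omega> \<in> S) * \<P>(\<omega> in M. U \<omega> \<in> X1')"
    unfolding U_X1 U_X1' by (rule prob_increment_indep_pinned_path[OF BM[OF x] abcd J12(1) S])
  then show ?thesis
    using indep_var_prob_conj[OF ind X1 X2] indep_var_prob_conj[OF ind X1' X2]
    by (simp add: field_J U_X1 conj_assoc)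
qed

lemma measurable_inf_field_energy [measurable]:
  "inf_field_energy L x I \<in> borel_measurable (Pi\<^sub>M UNIV (\<lambda>_. borel))"
  unfolding inf_field_energy_def field_energy_def
  by (rule borel_measurable_INF) (simp_all add: countableI_type)

lemma measurable_energy_gap:
  "energy_gap L x a b c d \<in> borel_measurable (Pi\<^sub>M UNIV (\<lambda>_. borel))"
  unfolding energy_gap_def by measurable

lemma (in prob_space) AE_energy_gap_ne_increment:
  assumes x: "x \<in> {1..L-1}"
    and BM: "\<And>y. y \<in> {1..L-1} \<Longrightarrow> two_sided_BM M (W y)"
    and indep: "indep_vars (\<lambda>_. Pi\<^sub>M UNIV (\<lambda>_. borel)) (\<lambda>y \<omega>. \<lambda>t. W y t \<omega>) {1..L-1}"
    and abcd: "a \<le> b" "b < c" "c \<le> d"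
  shows "AE \<omega> in M. energy_gap L x a b c d (pinned_field L x W a b c d \<omega>) \<noteq> W x c \<omega> - W x b \<omega>"
proof -
  have W [measurable]: "W y t \<in> borel_measurable M" if "y \<in> {1..L-1}" for y t
    using two_sided_BM_measurable[OF BM[OF that]] .
  have [measurable]: "(\<lambda>\<omega>. W x c \<omega> - W x b \<omega>) \<in> borel_measurable M"
    using x by measurable
  have "(\<lambda>\<omega>. pinned_field L x W a b c d \<omega> (y, t)) \<in> borel_measurable M" for y t
  proof (cases "y = x")
    case True
    then show ?thesis
      by (cases "t \<in> {a..b}"; cases "t \<in> {c..d}")
        (simp_all add: pinned_field_def pinned_path_def borel_measurable_diff W[OF x] del: atLeastAtMost_iff)
  next
    case False
    then show ?thesis by (cases "y \<in> {1..L-1}") (simp_all add: pinned_field_def W del: atLeastAtMost_iff)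
  qed
  then have field_i: "(\<lambda>\<omega>. pinned_field L x W a b c d \<omega> i) \<in> borel_measurable M" for i
    by (cases i) simp
  have ind: "indep_var borel (\<lambda>\<omega>. W x c \<omega> - W x b \<omega>)
      borel (\<lambda>\<omega>. energy_gap L x a b c d (pinned_field L x W a b c d \<omega>))"
  proof (rule indep_var_functional_of_finite_dim_indep[where Y="pinned_field L x W a b c d"])
    show "\<P>(\<omega> in M. W x c \<omega> - W x b \<omega> \<in> S \<and> (\<forall>i\<in>J. pinned_field L x W a b c d \<omega> i \<in> E i)) =
        \<P>(\<omega> in M. W x c \<omega> - W x b \<omega> \<in> S) * \<P>(\<omega> in M. \<forall>i\<in>J. pinned_field L x W a b c d \<omega> i \<in> E i)"
      if "finite J" "S \<in> sets borel" "\<And>i. i \<in> J \<Longrightarrow> E i \<in> sets borel" for J S E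
      by (rule prob_increment_indep_pinned_field[of x L W, OF x BM indep abcd that])
  qed (simp_all add: field_i measurable_energy_gap)
  then have "\<P>(\<omega> in M. W x c \<omega> - W x b \<omega> = energy_gap L x a b c d (pinned_field L x W a b c d \<omega>)) = 0"
    by (rule prob_eq_indep_of_density_eq_0[OF _ two_sided_BM_increment_distributed[OF BM[OF x] abcd(2)]])
  moreover have [measurable]: "(\<lambda>\<omega>. energy_gap L x a b c d (pinned_field L x W a b c d \<omega>)) \<in> borel_measurable M"
    using indep_var_rv2[OF ind] by simp
  then have "{\<omega>\<in>space M. W x c \<omega> - W x b \<omega> = energy_gap L x a b c d (pinned_field L x W a b c d \<omega>)} \<in> events"
    by measurable
  ultimately have "{\<omega>\<in>space M. W x c \<omega> - W x b \<omega> = energy_gap L x a b c d (pinned_field L x W a b c d \<omega>)}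
      \<in> null_sets M"
    by (simp add: null_sets_def emeasure_eq_measure)
  then show ?thesis by (rule AE_I') auto
qed

lemma (in prob_space) AE_energy_gaps_generic:
  assumes BM: "\<And>y. y \<in> {1..L-1} \<Longrightarrow> two_sided_BM M (W y)"
    and indep: "indep_vars (\<lambda>_. Pi\<^sub>M UNIV (\<lambda>_. borel)) (\<lambda>y \<omega>. \<lambda>t. W y t \<omega>) {1..L-1}"
  shows "AE \<omega> in M. energy_gaps_generic L W \<omega>"
  unfolding energy_gaps_generic_def AE_ball_countable[OF countable_finite[OF finite_atLeastAtMost]] AE_all_countable
  by (intro ballI allI AE_impI AE_energy_gap_ne_increment[of _ L W, OF _ BM indep])
    (auto simp: of_rat_less less_imp_le)

theorem lemma1:
  fixes M :: "'a measure" and W :: "nat \<Rightarrow> real \<Rightarrow> 'a \<Rightarrow> real" and L :: nat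
  assumes "prob_space M"
    and "L \<ge> 2"
    and "\<And>x. x \<in> {1..L-1} \<Longrightarrow> two_sided_BM M (W x)"
    and "prob_space.indep_vars M (\<lambda>_. Pi\<^sub>M UNIV (\<lambda>_. borel))
           (\<lambda>x \<omega>. \<lambda>t. W x t \<omega>) {1..L-1}"
  shows "AE \<omega> in M. \<exists>!h. h \<in> configs L \<and>
           (\<forall>g \<in> configs L. energy L W \<omega> h \<le> energy L W \<omega> g)"
proof -
  interpret prob_space M by fact
  have L: "0 < L" using assms(2) by simp
  have "AE \<omega> in M. \<forall>y\<in>{1..L-1}. \<exists>A C. \<forall>u. \<bar>W y u \<omega>\<bar> \<le> A * \<bar>u\<bar> + C"
    using assms(3) by (subst AE_ball_countable) (auto intro: two_sided_BM_linear_growth)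
  moreover have "AE \<omega> in M. \<forall>y\<in>{1..L-1}. continuous_on UNIV (\<lambda>t. W y t \<omega>) \<and> W y 0 \<omega> = 0"
    using assms(3) by (intro AE_I2) (auto simp: two_sided_BM_def)
  moreover have "AE \<omega> in M. energy_gaps_generic L W \<omega>"
    using assms(3,4) by (rule AE_energy_gaps_generic)
  ultimately show ?thesis
  proof eventually_elim
    case (elim \<omega>)
    then obtain h where "h \<in> configs L" "\<forall>g\<in>configs L. energy L W \<omega> h \<le> energy L W \<omega> g"
      using energy_has_minimizer_of_linear_growth[of L W \<omega>, OF L] by blast
    with elim show ?case
      by (intro ex1I[of _ h]) (auto intro: energy_minimizer_unique[of L W \<omega>, OF L])
  qed
qed

end
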